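(* Under the hypotheses of the variable-PAPR Rayleigh setting (channel $y=hx+v$, $v\sim\mathcal{CN}(0,1)$, perfect CSI at both ends, $|h|^2$ exponential with unit mean; $\mathcal{A}(\mathrm{SNR})\to\infty$, $\mathcal{A}(\mathrm{SNR})\mathrm{SNR}\to0$, peak constraint effective, and $l_0=\lim_{\mathrm{SNR}\to0}l(\mathrm{SNR})$ existing in $[0,\infty]$ with $l=\frac{1}{1/\lambda-\mathcal{A}(\mathrm{SNR})\mathrm{SNR}}-\lambda$), in both cases $l_0>0$ and $l_0=0$ one has $$\lim_{\mathrm{SNR}\to0}\frac{C(\mathrm{SNR})}{\mathrm{SNR}\log\mathcal{A}(\mathrm{SNR})}=1.$$ In particular, when $l_0>0$, $\log\mathcal{A}(\mathrm{SNR})\approx\log\frac1{\mathrm{SNR}}$.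
   Context: $\lambda$ is determined by $\mathrm{SNR}=\mathbf{E}[\min\{[1/\lambda-1/|h|^2]^+,\mathcal{A}(\mathrm{SNR})\,\mathrm{SNR}\}]$; the peak constraint is effective means $\mathcal{A}(\mathrm{SNR})\mathrm{SNR}<1/\lambda_0$ with $\mathrm{SNR}=\mathbf{E}[[1/\lambda_0-1/|h|^2]^+]$. $C(\mathrm{SNR})$ is the capacity under average power $\mathrm{SNR}$ and peak power $\mathcal{A}(\mathrm{SNR})\mathrm{SNR}$. $f\approx g$ means the ratio tends to 1 as $\mathrm{SNR}\to0$; logarithms are natural. *)

theory Defs
  imports "HOL-Analysis.Analysis"
begin

text \<open>Expectation with respect to the channel power gain g = |h|^2, which is
  exponentially distributed with unit mean (Rayleigh fading).\<close>
definition expE :: "(real \<Rightarrow> real) \<Rightarrow> real" where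
  "expE f = (LINT g:{0<..}|lborel. exp (- g) * f g)"

definition pos_part :: "real \<Rightarrow> real" where
  "pos_part x = max x 0"

text \<open>Capacity of the fading channel y = h x + v, v ~ CN(0,1), with perfect CSI at
  transmitter and receiver, under average power constraint P and peak power
  constraint Pk: the supremum over measurable power allocation policies
  p(g) in [0, Pk] with E[p(g)] <= P of E[log(1 + g p(g))].\<close>
definition capacity :: "real \<Rightarrow> real \<Rightarrow> real" where
  "capacity P Pk = (SUP p \<in> {p. p \<in> borel_measurable borel \<and> (\<forall>g. 0 \<le> p g \<and> p g \<le> Pk)
                                 \<and> expE p \<le> P}.
                      expE (\<lambda>g. ln (1 + g * p g)))"

end

theory Submission
  imports Defs "HOL-Real_Asymp.Real_Asymp"
begin

text \<open>Write the peak power as a s with a \<rightarrow> \<infinity> and a s \<rightarrow> 0. Bounding ln (1 + g p) by T p below a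
  threshold T and by g a s above it gives C \<le> s T + a s (T + 1) e^-T, and T = ln a + 2 ln (ln a)
  makes this s ln a (1 + o(1)); conversely, on-off signalling above the threshold
  ln a - ln (ln a) spends the budget s and achieves s ln a (1 - o(1)).
  If moreover l > c > 0, the peak power a s exceeds c / ((1 + c) \<lambda>^2), while the water level
  \<lambda> is at most ln (1/s) because s \<le> e^-\<lambda> / \<lambda>; so ln a = ln (1/s) - O(ln ln (1/s)).\<close>

definition expE_integrable :: "(real \<Rightarrow> real) \<Rightarrow> bool" where
  "expE_integrable f \<longleftrightarrow> set_integrable lborel {0<..} (\<lambda>g. exp (- g) * f g)"

lemma expE_add:
  assumes "expE_integrable f" "expE_integrable h"
  shows "expE_integrable (\<lambda>g. f g + h g)" "expE (\<lambda>g. f g + h g) = expE f + expE h"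
  using set_integral_add[OF assms[unfolded expE_integrable_def]]
  by (simp_all add: expE_integrable_def expE_def distrib_left)

lemma expE_cmult:
  assumes "expE_integrable f"
  shows "expE_integrable (\<lambda>g. c * f g)" "expE (\<lambda>g. c * f g) = c * expE f"
  using set_integrable_mult_right[of c, OF assms[unfolded expE_integrable_def]]
  by (simp_all add: expE_integrable_def expE_def mult.left_commute)

lemma expE_mono:
  assumes "expE_integrable f" "expE_integrable h" "\<And>g. g > 0 \<Longrightarrow> f g \<le> h g"
  shows "expE f \<le> expE h"
  using assms unfolding expE_integrable_def expE_def
  by (intro set_integral_mono) (auto intro: mult_left_mono)

lemma expE_integrable_dominated:
  assumes "f \<in> borel_measurable borel" "expE_integrable h" "\<And>g. g > 0 \<Longrightarrow> \<bar>f g\<bar> \<le> h g"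
  shows "expE_integrable f"
  unfolding expE_integrable_def
proof (rule set_integrable_bound[OF assms(2)[unfolded expE_integrable_def]])
  show "set_borel_measurable lborel {0<..} (\<lambda>g. exp (- g) * f g)"
    unfolding set_borel_measurable_def using assms(1) by measurable
  show "AE g in lborel. g \<in> {0<..} \<longrightarrow> norm (exp (- g) * f g) \<le> norm (exp (- g) * h g)"
    using assms(3) by (intro AE_I2) (force simp: abs_mult intro: mult_left_mono)
qed

lemma expE_tail:
  assumes "T \<ge> 0"
  shows "expE_integrable (\<lambda>g. f g * indicator {T<..} g)
           \<longleftrightarrow> set_integrable lborel {T<..} (\<lambda>g. exp (- g) * f g)"
    "expE (\<lambda>g. f g * indicator {T<..} g) = (LINT g:{T<..}|lborel. exp (- g) * f g)"
proof -
  have "(\<lambda>g. indicator {0<..} g *\<^sub>R (exp (- g) * (f g * indicator {T<..} g))) =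
        (\<lambda>g::real. indicator {T<..} g *\<^sub>R (exp (- g) * f g))"
    using assms by (auto simp: indicator_def)
  then show "expE_integrable (\<lambda>g. f g * indicator {T<..} g)
           \<longleftrightarrow> set_integrable lborel {T<..} (\<lambda>g. exp (- g) * f g)"
    "expE (\<lambda>g. f g * indicator {T<..} g) = (LINT g:{T<..}|lborel. exp (- g) * f g)"
    by (simp_all add: expE_integrable_def expE_def set_integrable_def set_lebesgue_integral_def)
qed

lemma expE_indicator_tail:
  assumes "T \<ge> 0"
  shows "expE_integrable (indicator {T<..})" "expE (indicator {T<..}) = exp (- T)"
proof -
  have "set_integrable lborel (einterval T \<infinity>) (\<lambda>g. exp (- g) * 1)"
    "(LBINT g=ereal T..\<infinity>. exp (- g) * 1) = 0 - (- exp (- T))"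
    by (rule interval_integral_FTC_nonneg[where F="\<lambda>g. - exp (- g)"];
        (auto intro!: derivative_eq_intros simp: ereal_tendsto_simps1)?;
        (real_asymp | (intro tendsto_intros continuous_intros)))+
  then show "expE_integrable (indicator {T<..})" "expE (indicator {T<..}) = exp (- T)"
    using expE_tail[OF assms, of "\<lambda>_. 1"]
    by (simp_all add: interval_lebesgue_integral_def)
qed

lemma expE_id_tail:
  assumes "T \<ge> 0"
  shows "expE_integrable (\<lambda>g. g * indicator {T<..} g)"
    "expE (\<lambda>g. g * indicator {T<..} g) = (T + 1) * exp (- T)"
proof -
  have "set_integrable lborel (einterval T \<infinity>) (\<lambda>g. exp (- g) * g)"
    "(LBINT g=ereal T..\<infinity>. exp (- g) * g) = 0 - (- (T + 1) * exp (- T))"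
    by (rule interval_integral_FTC_nonneg[where F="\<lambda>g. - (g + 1) * exp (- g)"];
        (use assms in \<open>auto intro!: derivative_eq_intros simp: ereal_tendsto_simps1 algebra_simps\<close>)?;
        (real_asymp | (intro tendsto_intros continuous_intros)))+
  then show "expE_integrable (\<lambda>g. g * indicator {T<..} g)"
    "expE (\<lambda>g. g * indicator {T<..} g) = (T + 1) * exp (- T)"
    using expE_tail[OF assms, of "\<lambda>g. g"]
    by (simp_all add: interval_lebesgue_integral_def algebra_simps)
qed

lemma expE_integrable_bounded:
  assumes "f \<in> borel_measurable borel" "\<And>g. g > 0 \<Longrightarrow> \<bar>f g\<bar> \<le> B"
  shows "expE_integrable f"
proof (rule expE_integrable_dominated[OF assms(1)])
  show "expE_integrable (\<lambda>g. B * indicator {0<..} g)"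
    using expE_indicator_tail(1)[of 0] by (intro expE_cmult) simp
  show "\<And>g. g > 0 \<Longrightarrow> \<bar>f g\<bar> \<le> B * indicator {0<..} g"
    using assms(2) by simp
qed

definition admissible_policies :: "real \<Rightarrow> real \<Rightarrow> (real \<Rightarrow> real) set" where
  "admissible_policies P Pk =
     {p. p \<in> borel_measurable borel \<and> (\<forall>g. 0 \<le> p g \<and> p g \<le> Pk) \<and> expE p \<le> P}"

lemma capacity_eq_SUP:
  "capacity P Pk = (SUP p \<in> admissible_policies P Pk. expE (\<lambda>g. ln (1 + g * p g)))"
  unfolding capacity_def admissible_policies_def ..

lemma expE_integrable_rate:
  assumes "p \<in> borel_measurable borel" "\<And>g. 0 \<le> p g \<and> p g \<le> Pk"
  shows "expE_integrable (\<lambda>g. ln (1 + g * p g))"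
proof (rule expE_integrable_dominated)
  show "(\<lambda>g. ln (1 + g * p g)) \<in> borel_measurable borel"
    using assms(1) by measurable
  show "expE_integrable (\<lambda>g. Pk * (g * indicator {0<..} g))"
    using expE_id_tail(1)[of 0] by (intro expE_cmult) simp
  fix g :: real assume g: "g > 0"
  have p: "0 \<le> p g" "p g \<le> Pk" using assms(2) by auto
  have "ln (1 + g * p g) \<le> g * p g" using g p by (intro ln_add_one_self_le_self) auto
  also have "\<dots> \<le> Pk * g" using g p by (simp add: mult.commute mult_right_mono)
  finally show "\<bar>ln (1 + g * p g)\<bar> \<le> Pk * (g * indicator {0<..} g)"
    using g p by simp
qed

lemma ln_one_plus_rate_le:
  fixes g T p Pk :: real
  assumes "g > 0" "T \<ge> 0" "0 \<le> p" "p \<le> Pk"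
  shows "ln (1 + g * p) \<le> T * p + Pk * (g * indicator {T<..} g)"
proof -
  have "ln (1 + g * p) \<le> g * p" using assms by (intro ln_add_one_self_le_self) auto
  also have "\<dots> \<le> T * p + Pk * (g * indicator {T<..} g)"
  proof (cases "g > T")
    case True
    then show ?thesis using assms by (simp add: mult_left_mono mult.commute add_increasing)
  next
    case False
    then show ?thesis using assms by (simp add: mult_right_mono)
  qed
  finally show ?thesis .
qed

lemma expE_rate_le:
  assumes pm: "p \<in> borel_measurable borel" and pb: "\<And>g. 0 \<le> p g \<and> p g \<le> Pk"
    and T: "T \<ge> 0"
  shows "expE (\<lambda>g. ln (1 + g * p g)) \<le> T * expE p + Pk * ((T + 1) * exp (- T))"
proof -
  have p_int: "expE_integrable p"
    using pb by (intro expE_integrable_bounded[OF pm, of Pk]) (auto simp: abs_le_iff)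
  have "expE (\<lambda>g. ln (1 + g * p g))
        \<le> expE (\<lambda>g. T * p g + Pk * (g * indicator {T<..} g))"
    using pb T
    by (intro expE_mono expE_integrable_rate[OF pm pb] expE_add expE_cmult p_int
        expE_id_tail ln_one_plus_rate_le) auto
  also have "\<dots> = T * expE p + Pk * ((T + 1) * exp (- T))"
    using T by (simp add: expE_add expE_cmult p_int expE_id_tail)
  finally show ?thesis .
qed

lemma capacity_le:
  assumes "Pk \<ge> 0" "T \<ge> 0" "P \<ge> 0"
  shows "capacity P Pk \<le> T * P + Pk * ((T + 1) * exp (- T))"
  unfolding capacity_eq_SUP
proof (rule cSUP_least)
  show "admissible_policies P Pk \<noteq> {}"
    using assms by (auto simp: admissible_policies_def expE_def intro!: exI[of _ "\<lambda>_. 0"])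
  fix p assume "p \<in> admissible_policies P Pk"
  then have "p \<in> borel_measurable borel" "\<And>g. 0 \<le> p g \<and> p g \<le> Pk" "expE p \<le> P"
    by (auto simp: admissible_policies_def)
  then have "expE (\<lambda>g. ln (1 + g * p g)) \<le> T * expE p + Pk * ((T + 1) * exp (- T))"
    "T * expE p \<le> T * P"
    using assms(2) by (auto intro: expE_rate_le mult_left_mono)
  then show "expE (\<lambda>g. ln (1 + g * p g)) \<le> T * P + Pk * ((T + 1) * exp (- T))"
    by linarith
qed

lemma capacity_ge_on_off:
  assumes Q: "0 < Q" "Q \<le> Pk" and T: "T \<ge> 0" and P: "Q * exp (- T) \<le> P"
  shows "ln (1 + T * Q) * exp (- T) \<le> capacity P Pk"
  unfolding capacity_eq_SUP
proof (rule cSUP_upper2)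
  show "bdd_above ((\<lambda>p. expE (\<lambda>g. ln (1 + g * p g))) ` admissible_policies P Pk)"
    using expE_rate_le[of _ Pk 1]
    by (intro bdd_aboveI2[where M="P + Pk * (2 * exp (- 1))"])
       (force simp: admissible_policies_def)
  define p where "p = (\<lambda>g::real. Q * indicator {T<..} g)"
  have pm: "p \<in> borel_measurable borel" unfolding p_def by measurable
  have pb: "\<And>g. 0 \<le> p g \<and> p g \<le> Q" using Q by (auto simp: p_def indicator_def)
  have "expE p = Q * exp (- T)"
    unfolding p_def using T by (simp add: expE_cmult expE_indicator_tail)
  then show "p \<in> admissible_policies P Pk"
    using pm pb Q P unfolding admissible_policies_def by (auto intro: order_trans)
  have "ln (1 + T * Q) * exp (- T) = expE (\<lambda>g. ln (1 + T * Q) * indicator {T<..} g)"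
    using T by (simp add: expE_cmult expE_indicator_tail)
  also have "\<dots> \<le> expE (\<lambda>g. ln (1 + g * p g))"
  proof (rule expE_mono)
    show "expE_integrable (\<lambda>g. ln (1 + T * Q) * indicator {T<..} g)"
      using T by (intro expE_cmult expE_indicator_tail)
    show "expE_integrable (\<lambda>g. ln (1 + g * p g))"
      by (rule expE_integrable_rate[OF pm pb])
    show "ln (1 + T * Q) * indicator {T<..} g \<le> ln (1 + g * p g)" if "g > 0" for g
    proof (cases "g > T")
      case True
      have "0 < 1 + T * Q" using T Q by (simp add: add_pos_nonneg)
      moreover have "T * Q \<le> g * Q" using True Q by (simp add: mult_right_mono)
      ultimately show ?thesis using True by (simp add: p_def)
    qed (simp add: p_def that less_imp_le)
  qed
  finally show "ln (1 + T * Q) * exp (- T) \<le> expE (\<lambda>g. ln (1 + g * p g))" .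
qed

lemma capacity_ratio_le:
  fixes a s :: real
  assumes s: "s > 0" and a: "a \<ge> exp 1"
  shows "capacity s (a * s) / (s * ln a)
           \<le> (ln a + 2 * ln (ln a)) / ln a + (ln a + 2 * ln (ln a) + 1) / ln a ^ 3"
proof -
  define L where "L = ln a"
  define T where "T = L + 2 * ln L"
  have a0: "a > 0" using a by (meson exp_gt_zero less_le_trans)
  have L1: "L \<ge> 1" unfolding L_def using a a0 by (simp add: ln_ge_iff)
  have T0: "T \<ge> 0" unfolding T_def using L1 by simp
  have eL: "exp L = a" unfolding L_def using a0 by simp
  have "exp (2 * ln L) = exp (ln L) ^ 2"
    using exp_of_nat_mult[of 2 "ln L"] by simp
  also have "\<dots> = L^2" using L1 by simp
  finally have eT: "exp (- T) = 1 / (a * L^2)"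
    unfolding T_def exp_minus exp_add eL by (simp add: inverse_eq_divide)
  have "capacity s (a * s) \<le> T * s + a * s * ((T + 1) * exp (- T))"
    using capacity_le[of "a * s" T s] a0 s T0 by simp
  also have "\<dots> = s * (T + (T + 1) / L^2)"
    unfolding eT using a0 L1 by (simp add: field_simps)
  finally have "capacity s (a * s) / (s * L) \<le> s * (T + (T + 1) / L^2) / (s * L)"
    using s L1 by (intro divide_right_mono) auto
  also have "\<dots> = T / L + (T + 1) / L ^ 3"
    using s L1 by (simp add: field_simps power2_eq_square power3_eq_cube)
  finally show ?thesis unfolding T_def L_def .
qed

lemma capacity_ratio_ge:
  fixes a s :: real
  assumes s: "s > 0" and a: "a \<ge> exp 1" and as: "a * s \<le> 1"
  shows "(ln a - ln (ln a)) / ln a - a * s \<le> capacity s (a * s) / (s * ln a)"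
proof -
  define L where "L = ln a"
  define Q where "Q = a * s / L"
  define T where "T = L - ln L"
  define r where "r = T / L"
  have a0: "a > 0" using a by (meson exp_gt_zero less_le_trans)
  have L1: "L \<ge> 1" unfolding L_def using a a0 by (simp add: ln_ge_iff)
  have lnL: "0 \<le> ln L" "ln L \<le> L - 1" using L1 by (auto intro: ln_le_minus_one)
  have as0: "a * s > 0" using a0 s by simp
  have Q: "0 < Q" "Q \<le> a * s"
    unfolding Q_def using as0 L1 by (auto simp: divide_le_eq mult_le_cancel_left1)
  have T0: "T \<ge> 0" unfolding T_def using lnL by simp
  have "exp L = a" unfolding L_def using a0 by simp
  then have eT: "exp (- T) = L / a"
    unfolding T_def using L1 by (simp add: exp_diff exp_minus)
  have r: "0 \<le> r" "r \<le> 1" unfolding r_def T_def using L1 lnL by auto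
  have TQ: "T * Q = r * (a * s)" unfolding r_def Q_def by simp
  have "Q * exp (- T) = s" unfolding eT Q_def using a0 L1 by simp
  then have "ln (1 + T * Q) * exp (- T) \<le> capacity s (a * s)"
    using capacity_ge_on_off[OF Q T0] by simp
  then have "ln (1 + T * Q) / (a * s) \<le> capacity s (a * s) / (s * L)"
    unfolding eT using a0 L1 s by (simp add: field_simps)
  moreover have "r * (a * s) - (r * (a * s))^2 \<le> ln (1 + T * Q)"
    unfolding TQ using r as0 as by (intro ln_one_plus_pos_lower_bound) (auto intro: mult_le_one)
  then have "(r * (a * s) - (r * (a * s))^2) / (a * s) \<le> ln (1 + T * Q) / (a * s)"
    using as0 by (intro divide_right_mono) auto
  moreover have "(r * (a * s) - (r * (a * s))^2) / (a * s) = r - r^2 * (a * s)"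
    using a0 s by (simp add: field_simps power2_eq_square)
  moreover have "r^2 * (a * s) \<le> a * s"
    using r as0 by (simp add: power_le_one mult_left_le_one_le)
  ultimately show ?thesis unfolding r_def T_def L_def by linarith
qed

lemma capacity_ratio_tendsto:
  fixes A :: "real \<Rightarrow> real"
  assumes A_inf: "filterlim A at_top (at_right 0)"
    and A_peak: "((\<lambda>s. A s * s) \<longlongrightarrow> 0) (at_right 0)"
  shows "((\<lambda>s. capacity s (A s * s) / (s * ln (A s))) \<longlongrightarrow> 1) (at_right 0)"
proof (rule tendsto_sandwich)
  have L_top: "filterlim (\<lambda>s. ln (A s)) at_top (at_right 0)"
    using filterlim_compose[OF ln_at_top A_inf] .
  have ev: "\<forall>\<^sub>F s in at_right 0. s > 0 \<and> A s \<ge> exp 1 \<and> A s * s \<le> 1"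
    using eventually_at_right_less[of "0::real"]
      A_inf[unfolded filterlim_at_top, rule_format, of "exp 1"]
      order_tendstoD(2)[OF A_peak zero_less_one]
    by eventually_elim auto
  then show "\<forall>\<^sub>F s in at_right 0. (ln (A s) - ln (ln (A s))) / ln (A s) - A s * s
               \<le> capacity s (A s * s) / (s * ln (A s))"
    by eventually_elim (auto intro: capacity_ratio_ge)
  from ev show "\<forall>\<^sub>F s in at_right 0. capacity s (A s * s) / (s * ln (A s))
      \<le> (ln (A s) + 2 * ln (ln (A s))) / ln (A s)
        + (ln (A s) + 2 * ln (ln (A s)) + 1) / ln (A s) ^ 3"
    by eventually_elim (auto intro: capacity_ratio_le)
  have "((\<lambda>x::real. (x - ln x) / x) \<longlongrightarrow> 1) at_top" by real_asymp
  from tendsto_diff[OF filterlim_compose[OF this L_top] A_peak]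
  show "((\<lambda>s. (ln (A s) - ln (ln (A s))) / ln (A s) - A s * s) \<longlongrightarrow> 1) (at_right 0)"
    by simp
  have "((\<lambda>x::real. (x + 2 * ln x) / x + (x + 2 * ln x + 1) / x ^ 3) \<longlongrightarrow> 1) at_top"
    by real_asymp
  from filterlim_compose[OF this L_top]
  show "((\<lambda>s. (ln (A s) + 2 * ln (ln (A s))) / ln (A s)
           + (ln (A s) + 2 * ln (ln (A s)) + 1) / ln (A s) ^ 3) \<longlongrightarrow> 1) (at_right 0)" .
qed

text \<open>The truncated water-filling allocation is at most 1/\<lambda> and vanishes for g \<le> \<lambda>.\<close>

lemma expE_truncated_water_filling_le:
  assumes lam: "lam > 0"
  shows "expE (\<lambda>g. min (pos_part (1 / lam - 1 / g)) P) \<le> exp (- lam) / lam"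
proof -
  have "expE (\<lambda>g. min (pos_part (1 / lam - 1 / g)) P) \<le> expE (\<lambda>g. 1 / lam * indicator {lam<..} g)"
  proof (rule expE_mono)
    show "expE_integrable (\<lambda>g. min (pos_part (1 / lam - 1 / g)) P)"
      by (rule expE_integrable_bounded[where B="max (1 / lam) \<bar>P\<bar>"])
         (auto simp: pos_part_def)
    show "expE_integrable (\<lambda>g. 1 / lam * indicator {lam<..} g)"
      using lam by (intro expE_cmult expE_indicator_tail) simp
    show "min (pos_part (1 / lam - 1 / g)) P \<le> 1 / lam * indicator {lam<..} g" if "g > 0" for g
    proof (cases "g > lam")
      case False
      then have "1 / lam \<le> 1 / g" using that lam by (simp add: frac_le)
      then show ?thesis using False by (simp add: pos_part_def min_def)
    next
      case True
      have "pos_part (1 / lam - 1 / g) \<le> 1 / lam" using that lam by (simp add: pos_part_def)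
      then show ?thesis using True by (simp add: min.coboundedI1)
    qed
  qed
  also have "\<dots> = 1 / lam * expE (indicator {lam<..})"
    using lam by (intro expE_cmult(2) expE_indicator_tail(1)) simp
  also have "\<dots> = exp (- lam) / lam"
    using lam by (simp add: expE_indicator_tail)
  finally show ?thesis .
qed

lemma water_level_le_ln:
  assumes lam: "lam > 0" and s: "0 < s" "s \<le> exp (- 1)"
    and s_eq: "s = expE (\<lambda>g. min (pos_part (1 / lam - 1 / g)) P)"
  shows "lam \<le> ln (1 / s)"
proof (cases "lam \<ge> 1")
  case True
  have "s \<le> exp (- lam) / lam"
    unfolding s_eq using lam by (rule expE_truncated_water_filling_le)
  also have "\<dots> \<le> exp (- lam)" using True by (simp add: divide_le_eq)
  finally have "ln s \<le> ln (exp (- lam))" using s by (subst ln_le_cancel_iff) auto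
  then show ?thesis using s by (simp add: ln_div)
next
  case False
  have "exp 1 \<le> 1 / s" using s by (simp add: exp_minus field_simps)
  then have "1 \<le> ln (1 / s)" using s by (simp add: ln_ge_iff)
  with False show ?thesis by simp
qed

text \<open>Solving c < 1/(1/\<lambda> - P) - \<lambda> for P gives P > c/(\<lambda>(\<lambda> + c)).\<close>

lemma peak_power_gt:
  fixes lam P c M :: real
  assumes lam: "0 < lam" "lam \<le> M" and M: "M \<ge> 1" and c: "c > 0"
    and l_gt: "c < 1 / (1 / lam - P) - lam"
  shows "c / (1 + c) / M^2 < P"
proof -
  define d where "d = 1 / lam - P"
  have d0: "d > 0"
  proof (rule ccontr)
    assume "\<not> d > 0"
    then have "1 / d \<le> 0" by simp
    with l_gt lam c show False unfolding d_def by linarith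
  qed
  have "1 / d > lam + c" using l_gt unfolding d_def by simp
  then have "d < 1 / (lam + c)" using d0 lam c by (simp add: field_simps)
  moreover have "1 / lam - 1 / (lam + c) = c / (lam * (lam + c))"
    using lam c by (simp add: field_simps)
  ultimately have P_gt: "c / (lam * (lam + c)) < P" unfolding d_def by simp
  have "c \<le> M * c" using mult_right_mono[OF M, of c] c by simp
  then have "lam + c \<le> M * (1 + c)" using lam by (simp add: algebra_simps)
  then have "lam * (lam + c) \<le> M * (M * (1 + c))"
    using lam c by (intro mult_mono) auto
  then have "c / (M * (M * (1 + c))) \<le> c / (lam * (lam + c))"
    using lam c by (intro divide_left_mono) auto
  with P_gt show ?thesis by (simp add: power2_eq_square mult_ac)
qed

lemma ln_peak_ratio_tendsto:
  fixes A lam :: "real \<Rightarrow> real" and c :: real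
  assumes c: "c > 0"
    and lam_def: "\<forall>\<^sub>F s in at_right 0. lam s > 0 \<and>
                    s = expE (\<lambda>g. min (pos_part (1 / lam s - 1 / g)) (A s * s))"
    and l_gt: "\<forall>\<^sub>F s in at_right 0. c < 1 / (1 / lam s - A s * s) - lam s"
    and peak_le: "\<forall>\<^sub>F s in at_right 0. A s * s \<le> 1"
  shows "((\<lambda>s. ln (A s) / ln (1 / s)) \<longlongrightarrow> 1) (at_right 0)"
proof (rule tendsto_sandwich[OF _ _ _ tendsto_const])
  define K where "K = ln (c / (1 + c))"
  have small: "\<forall>\<^sub>F s in at_right (0::real). 0 < s \<and> s < exp (- 1)"
    by (intro eventually_conj eventually_at_right_less order_tendstoD(2)[OF tendsto_ident_at]) simp
  have "\<forall>\<^sub>F s in at_right 0. 1 + (K - 2 * ln (ln (1 / s))) / ln (1 / s) \<le> ln (A s) / ln (1 / s)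
          \<and> ln (A s) / ln (1 / s) \<le> 1"
    using small lam_def l_gt peak_le
  proof eventually_elim
    case (elim s)
    define P where "P = A s * s"
    define M where "M = ln (1 / s)"
    have "exp 1 \<le> 1 / s" using elim by (simp add: exp_minus field_simps)
    then have M1: "1 \<le> M" unfolding M_def using elim by (simp add: ln_ge_iff)
    have "lam s \<le> M"
      unfolding M_def using elim by (intro water_level_le_ln) auto
    then have P_gt: "c / (1 + c) / M^2 < P"
      unfolding P_def using elim M1 c by (intro peak_power_gt) auto
    moreover have "0 < c / (1 + c) / M^2" using c M1 by simp
    ultimately have P0: "0 < P" by linarith
    have "ln (c / (1 + c) / M^2) = K - 2 * ln M"
      unfolding K_def using c M1 by (simp add: ln_div ln_mult ln_realpow)
    moreover have "ln (c / (1 + c) / M^2) \<le> ln P"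
      using P_gt P0 c M1 by simp
    ultimately have "(K - 2 * ln M) / M \<le> ln P / M"
      using M1 by (intro divide_right_mono) auto
    moreover have "ln P / M \<le> 0"
      using P0 elim M1 unfolding P_def by (simp add: divide_nonpos_pos)
    moreover have "ln (A s) / M = 1 + ln P / M"
    proof -
      have "A s = P / s" unfolding P_def using elim by simp
      then have "ln (A s) = ln P + M" unfolding M_def using P0 elim by (simp add: ln_div)
      then show ?thesis using M1 by (simp add: field_simps)
    qed
    ultimately show ?case unfolding M_def[symmetric] by linarith
  qed
  then show "\<forall>\<^sub>F s in at_right 0. 1 + (K - 2 * ln (ln (1 / s))) / ln (1 / s) \<le> ln (A s) / ln (1 / s)"
    "\<forall>\<^sub>F s in at_right 0. ln (A s) / ln (1 / s) \<le> 1"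
    by (auto elim: eventually_mono)
  show "((\<lambda>s. 1 + (K - 2 * ln (ln (1 / s))) / ln (1 / s)) \<longlongrightarrow> 1) (at_right 0)"
    by real_asymp
qed

theorem mainTheorem8:
  fixes A lam lam0 :: "real \<Rightarrow> real" and l0 :: ereal
  assumes A_inf: "filterlim A at_top (at_right 0)"
    and A_peak: "((\<lambda>s. A s * s) \<longlongrightarrow> 0) (at_right 0)"
    and lam_def: "\<forall>\<^sub>F s in at_right 0. lam s > 0 \<and>
                    s = expE (\<lambda>g. min (pos_part (1 / lam s - 1 / g)) (A s * s))"
    and lam0_eff: "\<forall>\<^sub>F s in at_right 0. lam0 s > 0 \<and>
                    s = expE (\<lambda>g. pos_part (1 / lam0 s - 1 / g)) \<and> A s * s < 1 / lam0 s"
    and l_lim: "((\<lambda>s. ereal (1 / (1 / lam s - A s * s) - lam s)) \<longlongrightarrow> l0) (at_right 0)"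
    and l0_nonneg: "l0 \<ge> 0"
  shows "((\<lambda>s. capacity s (A s * s) / (s * ln (A s))) \<longlongrightarrow> 1) (at_right 0)
         \<and> (l0 > 0 \<longrightarrow> ((\<lambda>s. ln (A s) / ln (1 / s)) \<longlongrightarrow> 1) (at_right 0))"
proof (intro conjI impI)
  show "((\<lambda>s. capacity s (A s * s) / (s * ln (A s))) \<longlongrightarrow> 1) (at_right 0)"
    using A_inf A_peak by (rule capacity_ratio_tendsto)
  assume "l0 > 0"
  then obtain c where c: "0 < c" "ereal c < l0"
    using ereal_dense2[of 0 l0] by auto
  have "\<forall>\<^sub>F s in at_right 0. c < 1 / (1 / lam s - A s * s) - lam s"
    using order_tendstoD(1)[OF l_lim c(2)] by simp
  moreover have "\<forall>\<^sub>F s in at_right 0. A s * s \<le> 1"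
    using order_tendstoD(2)[OF A_peak zero_less_one] by (rule eventually_mono) simp
  ultimately show "((\<lambda>s. ln (A s) / ln (1 / s)) \<longlongrightarrow> 1) (at_right 0)"
    using c(1) lam_def by (intro ln_peak_ratio_tendsto)
qed

end
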